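(* Let $a<b$ be real numbers with $\frac{a+b}{2}>0$, let $\mathcal D=U(a,b)$, and let $(N,u)\sim H(n,\mathcal D)$ be a random additively separable hedonic game. Then $$\lim_{n\to\infty}\mathbb P\big((N,u)\text{ admits a Nash-stable partition}\big)=1.$$
   Context: Additively separable hedonic game: a finite agent set $N$ and utilities $u_x(y)\in\mathbb R$ for ordered pairs $x\ne y$; for a coalition $C\ni x$, $u_x(C)=\sum_{y\in C\setminus\{x\}}u_x(y)$ (singleton has utility $0$). Random model $H(n,\mathcal D)$: $|N|=n$ and all $u_x(y)$, $x\ne y$, i.i.d. from $\mathcal D$. A partition $\pi$ of $N$ is Nash-stable if no agent $x$ can strictly increase its utility by moving alone to another coalition of $\pi$ or to a new singleton coalition. *)

theory Defs
  imports "HOL-Probability.Probability" "HOL-Library.Disjoint_Sets"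
begin

definition agents :: "nat \<Rightarrow> nat set" where
  "agents n = {..<n}"

definition agent_pairs :: "nat \<Rightarrow> (nat \<times> nat) set" where
  "agent_pairs n = {(x, y). x < n \<and> y < n \<and> x \<noteq> y}"

definition coal_util :: "((nat \<times> nat) \<Rightarrow> real) \<Rightarrow> nat \<Rightarrow> nat set \<Rightarrow> real" where
  "coal_util u x C = (\<Sum>y\<in>C - {x}. u (x, y))"

definition nash_stable :: "nat set \<Rightarrow> ((nat \<times> nat) \<Rightarrow> real) \<Rightarrow> nat set set \<Rightarrow> bool" where
  "nash_stable N u \<pi> \<longleftrightarrow> partition_on N \<pi> \<and>
     (\<forall>x\<in>N. \<forall>C\<in>\<pi>. x \<in> C \<longrightarrow>
        coal_util u x {x} \<le> coal_util u x C \<and>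
        (\<forall>C'\<in>\<pi>. C' \<noteq> C \<longrightarrow> coal_util u x (insert x C') \<le> coal_util u x C))"

text \<open>The random model H(n, U(a,b)): all u(x,y), x \<noteq> y, i.i.d. uniform on (a,b).\<close>
definition H_unif :: "nat \<Rightarrow> real \<Rightarrow> real \<Rightarrow> ((nat \<times> nat) \<Rightarrow> real) measure" where
  "H_unif n a b = PiM (agent_pairs n) (\<lambda>_. uniform_measure lborel {a<..<b})"

definition admits_nash_stable :: "nat \<Rightarrow> ((nat \<times> nat) \<Rightarrow> real) \<Rightarrow> bool" where
  "admits_nash_stable n u \<longleftrightarrow> (\<exists>\<pi>. nash_stable (agents n) u \<pi>)"

end

theory Submission
  imports Defs "HOL-Real_Asymp.Real_Asymp"
begin

text \<open>
  The grand coalition is Nash-stable as soon as every agent's total utility for all other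
  agents is nonnegative: staying then beats leaving to a singleton, and there is no other
  coalition to move to. That total is a sum of \<open>n - 1\<close> i.i.d. variables on \<open>[a, b]\<close>
  with positive mean \<open>(a + b) / 2\<close>, so by Hoeffding's inequality it is nonpositive with
  probability at most \<open>exp (- c (n - 1))\<close>, where \<open>c = (a + b)\<^sup>2 / (2 (b - a)\<^sup>2)\<close>.
  A union bound over the \<open>n\<close> agents leaves a failure probability of at most
  \<open>n exp (- c (n - 1)) \<rightarrow> 0\<close>.
\<close>

lemma nash_stable_grand_coalition:
  assumes "N \<noteq> {}" and "\<forall>x\<in>N. 0 \<le> coal_util u x N"
  shows "nash_stable N u {N}"
  using assms by (auto simp: nash_stable_def partition_on_def disjoint_def coal_util_def)

lemma coal_util_eq_sum_pairs: "coal_util u x C = (\<Sum>p\<in>Pair x ` (C - {x}). u p)"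
  unfolding coal_util_def by (subst sum.reindex) (auto simp: inj_on_def)

lemma indep_vars_PiM_components:
  assumes "\<And>i. i \<in> I \<Longrightarrow> prob_space (M i)"
  shows "prob_space.indep_vars (PiM I M) M (\<lambda>i \<omega>. \<omega> i) I"
proof -
  interpret prob_space "PiM I M" using assms by (rule prob_space_PiM)
  show ?thesis
  proof (cases "I = {}")
    case True
    then show ?thesis unfolding indep_vars_def indep_sets_def by simp
  next
    case False
    have "distr (PiM I M) (PiM I M) (\<lambda>\<omega>. \<lambda>i\<in>I. \<omega> i) = PiM I M"
      using distr_PiM_reindex[of I M id I] assms by simp
    also have "\<dots> = PiM I (\<lambda>i. distr (PiM I M) (M i) (\<lambda>\<omega>. \<omega> i))"
      by (rule PiM_cong) (simp_all add: distr_PiM_component assms)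
    finally show ?thesis
      by (subst indep_vars_iff_distr_eq_PiM'[OF False]) simp_all
  qed
qed

lemma borel_measurable_PiM_component:
  assumes "sets D = sets borel"
  shows "(\<lambda>\<omega>. \<omega> i) \<in> borel_measurable (PiM I (\<lambda>_. D))"
proof (cases "i \<in> I")
  case True
  then have "(\<lambda>\<omega>. \<omega> i) \<in> measurable (PiM I (\<lambda>_. D)) D"
    by (rule measurable_component_singleton)
  then show ?thesis using assms by (simp cong: measurable_cong_sets)
next
  case False
  then have "\<omega> i = undefined" if "\<omega> \<in> space (PiM I (\<lambda>_. D))" for \<omega>
    using that by (auto simp: space_PiM)
  then show ?thesis by (subst measurable_cong[where g = "\<lambda>_. undefined"]) simp_all
qed

lemma prob_PiM_sum_components_nonpos_le:
  fixes D :: "real measure"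
  assumes D: "prob_space D" "sets D = sets borel" and bounded: "AE x in D. x \<in> {a..b}"
    and "a < b" and J: "finite J" "J \<subseteq> I" "J \<noteq> {}" and mean: "(\<integral>x. x \<partial>D) \<ge> 0"
  shows "measure (PiM I (\<lambda>_. D)) {\<omega> \<in> space (PiM I (\<lambda>_. D)). (\<Sum>i\<in>J. \<omega> i) \<le> 0}
           \<le> exp (- 2 * real (card J) * (\<integral>x. x \<partial>D)\<^sup>2 / (b - a)\<^sup>2)"
proof -
  let ?P = "PiM I (\<lambda>_. D)"
  define m where "m = (\<integral>x. x \<partial>D)"
  interpret prob_space ?P using D(1) by (rule prob_space_PiM)
  have component: "(\<lambda>\<omega>. \<omega> i) \<in> measurable ?P D" if "i \<in> I" for i
    using that by (rule measurable_component_singleton)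
  have "indep_vars (\<lambda>_. D) (\<lambda>i \<omega>. \<omega> i) J"
    using indep_vars_PiM_components[of I "\<lambda>_. D"] D(1) J(2) by (auto intro: indep_vars_subset)
  then have indep: "indep_vars (\<lambda>_. borel) (\<lambda>i \<omega>. \<omega> i) J"
    by (rule indep_vars_compose2[where Y = "\<lambda>_ x. x", simplified])
      (simp add: D(2) cong: measurable_cong_sets)
  have expectation_component: "expectation (\<lambda>\<omega>. \<omega> i) = m" if "i \<in> I" for i
    using integral_distr[OF component[OF that], of "\<lambda>x. x"] distr_PiM_component[of I "\<lambda>_. D" i]
      D that
    by (simp add: m_def)
  interpret Hoeffding_ineq ?P J "\<lambda>i \<omega>. \<omega> i" "\<lambda>_. a" "\<lambda>_. b" "card J * m"
  proof unfold_locales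
    show "AE \<omega> in ?P. \<omega> i \<in> {a..b}" if "i \<in> J" for i
      using AE_PiM_component[of I "\<lambda>_. D" i] D(1) bounded that J(2) by blast
    have "(\<Sum>i\<in>J. expectation (\<lambda>\<omega>. \<omega> i)) = card J * m"
      using expectation_component J(2) by (simp add: subset_iff)
    then show "card J * m \<equiv> (\<Sum>i\<in>J. expectation (\<lambda>\<omega>. \<omega> i))"
      by simp
  qed (use J indep in auto)
  have card_pos: "real (card J) > 0" using J by (simp add: card_gt_0_iff)
  have "prob {\<omega> \<in> space ?P. (\<Sum>i\<in>J. \<omega> i) \<le> card J * m - card J * m}
          \<le> exp (- 2 * (card J * m)\<^sup>2 / (\<Sum>i\<in>J. (b - a)\<^sup>2))"
    by (rule Hoeffding_ineq_le) (use card_pos mean \<open>a < b\<close> in \<open>simp_all add: m_def\<close>)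
  also have "- 2 * (card J * m)\<^sup>2 / (\<Sum>i\<in>J. (b - a)\<^sup>2) = - 2 * card J * m\<^sup>2 / (b - a)\<^sup>2"
    using card_pos by (simp add: power2_eq_square)
  finally show ?thesis by (simp add: m_def)
qed

lemma borel_measurable_coal_util:
  assumes "\<And>p. (\<lambda>u. u p) \<in> borel_measurable M"
  shows "(\<lambda>u. coal_util u x C) \<in> borel_measurable M"
  using assms by (cases "finite (C - {x})") (simp_all add: coal_util_def)

lemma sets_admits_nash_stable:
  assumes "\<And>p. (\<lambda>u. u p) \<in> borel_measurable M"
  shows "{u \<in> space M. admits_nash_stable n u} \<in> sets M"
proof -
  have [measurable]: "Measurable.pred M (\<lambda>u. coal_util u x C \<le> coal_util u y C')" for x y C C'
    using borel_measurable_coal_util[OF assms] by (simp add: Measurable.pred_def)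
  have "Measurable.pred M (\<lambda>u. nash_stable (agents n) u \<pi>)" if "\<pi> \<subseteq> Pow (agents n)" for \<pi>
  proof -
    have [simp]: "finite \<pi>" using that by (rule finite_subset) (simp add: agents_def)
    show ?thesis unfolding nash_stable_def agents_def by measurable
  qed
  then have "Measurable.pred M (\<lambda>u. \<exists>\<pi>\<in>Pow (Pow (agents n)). nash_stable (agents n) u \<pi>)"
    by (intro pred_intros_finite) (auto simp: agents_def)
  moreover have
    "admits_nash_stable n u \<longleftrightarrow> (\<exists>\<pi>\<in>Pow (Pow (agents n)). nash_stable (agents n) u \<pi>)" for u
    unfolding admits_nash_stable_def nash_stable_def partition_on_def by blast
  ultimately show ?thesis by simp
qed

lemma prob_space_uniform_interval: "a < b \<Longrightarrow> prob_space (uniform_measure lborel {a<..<b::real})"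
  by (rule prob_space_uniform_measure) auto

lemma integral_uniform_interval:
  assumes "a < (b::real)"
  shows "(\<integral>x. x \<partial>uniform_measure lborel {a<..<b}) = (a + b) / 2"
proof -
  let ?U = "uniform_measure lborel {a<..<b}"
  interpret prob_space ?U using assms by (rule prob_space_uniform_interval)
  have "AE x in lborel. x \<noteq> a \<and> x \<noteq> b"
    using AE_lborel_singleton[of a] AE_lborel_singleton[of b] by (rule AE_conjI)
  then have "AE x in lborel. indicator {a<..<b} x / emeasure lborel {a<..<b}
               = ennreal (indicator {a..b} x / measure lborel {a..b})"
    by (rule eventually_mono) (use assms in \<open>auto simp: indicator_def divide_ennreal
          simp flip: divide_ennreal[of 1 "b - a", simplified]\<close>)
  then have "?U = density lborel (\<lambda>x. ennreal (indicator {a..b} x / measure lborel {a..b}))"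
    unfolding uniform_measure_def by (intro density_cong) auto
  then have "distributed ?U lborel (\<lambda>x. x) (\<lambda>x. indicator {a..b} x / measure lborel {a..b})"
    unfolding distributed_def by (subst distr_id2) auto
  then show ?thesis by (rule uniform_distributed_expectation)
qed

lemma prob_space_H_unif: "a < b \<Longrightarrow> prob_space (H_unif n a b)"
  unfolding H_unif_def by (intro prob_space_PiM prob_space_uniform_interval)

lemma sets_H_unif_admits_nash_stable:
  "{u \<in> space (H_unif n a b). admits_nash_stable n u} \<in> sets (H_unif n a b)"
  unfolding H_unif_def by (intro sets_admits_nash_stable borel_measurable_PiM_component) simp

lemma prob_H_unif_coal_util_nonpos_le:
  assumes "a < b" and "(a + b) / 2 > 0" and "x < n" and "2 \<le> n"
  shows "measure (H_unif n a b) {u \<in> space (H_unif n a b). coal_util u x (agents n) \<le> 0}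
           \<le> exp (- 2 * (real n - 1) * ((a + b) / 2)\<^sup>2 / (b - a)\<^sup>2)"
proof -
  let ?U = "uniform_measure lborel {a<..<b}"
  let ?J = "Pair x ` (agents n - {x})"
  have J: "finite ?J" "?J \<subseteq> agent_pairs n"
    using \<open>x < n\<close> by (auto simp: agents_def agent_pairs_def)
  have "card ?J = n - 1"
    using \<open>x < n\<close> by (subst card_image) (auto simp: inj_on_def agents_def)
  then have card_J: "real (card ?J) = real n - 1" "card ?J > 0"
    using \<open>2 \<le> n\<close> by auto
  have bounded: "AE x in ?U. x \<in> {a..b}"
    by (rule AE_uniform_measureI) auto
  have "?J \<noteq> {}" using card_J(2) card_gt_0_iff by blast
  from prob_PiM_sum_components_nonpos_le
    [OF prob_space_uniform_interval[OF \<open>a < b\<close>] _ bounded \<open>a < b\<close> J this]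
  have "measure (PiM (agent_pairs n) (\<lambda>_. ?U))
          {\<omega> \<in> space (PiM (agent_pairs n) (\<lambda>_. ?U)). (\<Sum>p\<in>?J. \<omega> p) \<le> 0}
          \<le> exp (- 2 * real (card ?J) * ((a + b) / 2)\<^sup>2 / (b - a)\<^sup>2)"
    using assms(2) by (simp add: integral_uniform_interval[OF \<open>a < b\<close>])
  then show ?thesis
    unfolding H_unif_def coal_util_eq_sum_pairs card_J(1) .
qed

lemma prob_H_unif_admits_nash_stable_ge:
  assumes "a < b" and "(a + b) / 2 > 0" and "2 \<le> n"
  shows "1 - n * exp (- 2 * (real n - 1) * ((a + b) / 2)\<^sup>2 / (b - a)\<^sup>2)
           \<le> measure (H_unif n a b) {u \<in> space (H_unif n a b). admits_nash_stable n u}"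
proof -
  interpret prob_space "H_unif n a b" using \<open>a < b\<close> by (rule prob_space_H_unif)
  let ?S = "space (H_unif n a b)"
  let ?A = "{u \<in> ?S. admits_nash_stable n u}"
  define B where "B x = {u \<in> ?S. coal_util u x (agents n) \<le> 0}" for x
  have B_events: "B x \<in> events" for x
    unfolding B_def H_unif_def
    by (intro borel_measurable_le borel_measurable_const borel_measurable_coal_util
        borel_measurable_PiM_component) simp
  have "?S - ?A \<subseteq> (\<Union>x\<in>agents n. B x)"
  proof
    fix u assume u: "u \<in> ?S - ?A"
    have "agents n \<noteq> {}" using \<open>2 \<le> n\<close> by (simp add: agents_def lessThan_empty_iff)
    then obtain x where "x \<in> agents n" "coal_util u x (agents n) < 0"
      using u nash_stable_grand_coalition[of "agents n" u] by (force simp: admits_nash_stable_def)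
    then show "u \<in> (\<Union>x\<in>agents n. B x)" using u by (auto simp: B_def intro: less_imp_le)
  qed
  then have "prob (?S - ?A) \<le> prob (\<Union>x\<in>agents n. B x)"
    using B_events by (intro finite_measure_mono) auto
  also have "\<dots> \<le> (\<Sum>x\<in>agents n. prob (B x))"
    using B_events by (intro measure_UNION_le) (auto simp: agents_def)
  also have "\<dots> \<le> (\<Sum>x\<in>agents n. exp (- 2 * (real n - 1) * ((a + b) / 2)\<^sup>2 / (b - a)\<^sup>2))"
    unfolding B_def using prob_H_unif_coal_util_nonpos_le[OF assms(1,2) _ assms(3)]
    by (intro sum_mono) (auto simp: agents_def)
  finally show ?thesis
    using prob_compl[OF sets_H_unif_admits_nash_stable] by (simp add: agents_def)
qed

theorem proposition3:
  fixes a b :: real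
  assumes "a < b" and "(a + b) / 2 > 0"
  shows "(\<lambda>n. measure (H_unif n a b)
            {u \<in> space (H_unif n a b). admits_nash_stable n u}) \<longlonglongrightarrow> 1"
proof -
  define p where
    "p = (\<lambda>n. measure (H_unif n a b) {u \<in> space (H_unif n a b). admits_nash_stable n u})"
  define c where "c = 2 * ((a + b) / 2)\<^sup>2 / (b - a)\<^sup>2"
  have "c > 0" using assms by (simp add: c_def)
  then have lower_limit: "(\<lambda>n. 1 - real n * exp (- c * (real n - 1))) \<longlonglongrightarrow> 1"
    by real_asymp
  have lower: "eventually (\<lambda>n. 1 - real n * exp (- c * (real n - 1)) \<le> p n) sequentially"
  proof (rule eventually_sequentiallyI)
    fix n :: nat assume "2 \<le> n"
    have "- c * (real n - 1) = - 2 * (real n - 1) * ((a + b) / 2)\<^sup>2 / (b - a)\<^sup>2"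
      unfolding c_def by (simp add: divide_simps) (simp add: algebra_simps)
    then show "1 - real n * exp (- c * (real n - 1)) \<le> p n"
      using prob_H_unif_admits_nash_stable_ge[OF assms \<open>2 \<le> n\<close>] by (simp add: p_def)
  qed
  have upper: "eventually (\<lambda>n. p n \<le> 1) sequentially"
    using prob_space.prob_le_1[OF prob_space_H_unif[OF assms(1)]] by (simp add: p_def)
  from lower upper lower_limit tendsto_const have "p \<longlonglongrightarrow> 1"
    by (rule tendsto_sandwich)
  then show ?thesis unfolding p_def .
qed

end
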